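(* For all integers $d\ge1$ and $1\le s\le 2(q-1)$, the following identity holds in $K[t_1,\dots,t_s,z]$: \[ N^{(d+1)}(\chi_1\cdots\chi_s)=\prod_{i=1}^s N^{(d+1)}_i \;-\; [d+1]\,E_{d+1}\sum_{l=q}^{s}(E_d)^{l-q}\sum_{\substack{\alpha\in\{0,1\}^s\\|\alpha|=l}}\ \prod_{i=1}^s \big(N^{(d)}_i\big)^{1-\alpha_i}\big(b^{(d)}_i\big)^{\alpha_i}, \] where all $E_j$ are evaluated at $z$ and the sum over $l$ is empty when $s<q$.
   Context: $A=\mathbb{F}_q[\theta]$, $K=\mathbb{F}_q(\theta)$; $\chi_i:A\to\mathbb{F}_q[t_1,\dots,t_s]$ is the $\mathbb{F}_q$-algebra map with $\theta\mapsto t_i$. $D_j$ is the product of the monic polynomials of degree $j$ in $A$; $A(d)$ is the set of elements of $A$ of degree $<d$ ($A(0)=\{0\}$); $E_d(z)=D_d^{-1}\prod_{a\in A(d)}(z-a)$; $b_d(t)=\prod_{j=0}^{d-1}(t-\theta^{q^j})$; $\ell_d=\prod_{j=1}^{d}(\theta-\theta^{q^j})$; $[d]=\theta^{q^d}-\theta$. For a function $f$ on $A(d)$ with values in $K[t_1,\dots,t_s]$, $N^{(d)}(f)(z)=\sum_{a\in A(d)}f(a)\,\ell_dE_d(z-a)/(z-a)$, the unique polynomial in $z$ of degree $<q^d$ agreeing with $f$ on $A(d)$. Put $N^{(d)}_i=N^{(d)}(\chi_i)$ (which equals $\sum_{j=0}^{d-1}b_j(t_i)E_j(z)$) and $b^{(d)}_i=b_d(t_i)$.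 For $\alpha\in\{0,1\}^s$, $|\alpha|=\alpha_1+\cdots+\alpha_s$. *)

theory Defs
  imports "HOL-Library.FuncSet" "HOL-Computational_Algebra.Polynomial" "HOL-Computational_Algebra.Fraction_Field"
begin

text \<open>F_q is a finite field type 'a with q = card (UNIV :: 'a set); A = 'a poly (variable theta);
  K = 'a poly fract, the fraction field of A.\<close>

type_synonym 'a KK = "'a poly fract"

definition embA :: "'a::{finite,field} poly \<Rightarrow> 'a KK" where
  "embA a = Fract a 1"

definition theta :: "'a::{finite,field} KK" where
  "theta = embA [:0, 1:]"

definition Aset :: "nat \<Rightarrow> 'a::{finite,field} poly set" where
  "Aset d = {a. a = 0 \<or> degree a < d}"

definition Dprod :: "nat \<Rightarrow> 'a::{finite,field} KK" where
  "Dprod j = (\<Prod>p\<in>{p :: 'a poly. lead_coeff p = 1 \<and> degree p = j}. embA p)"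

definition Efun :: "nat \<Rightarrow> 'a::{finite,field} KK \<Rightarrow> 'a KK" where
  "Efun d z = inverse (Dprod d :: 'a KK) * (\<Prod>a\<in>Aset d. z - embA a)"

text \<open>The polynomial E_d(w)/w (exact polynomial quotient, since 0 is in A(d)).\<close>
definition Equot :: "nat \<Rightarrow> 'a::{finite,field} KK \<Rightarrow> 'a KK" where
  "Equot d w = inverse (Dprod d :: 'a KK) * (\<Prod>a\<in>Aset d - {0}. w - embA a)"

definition bfun :: "nat \<Rightarrow> 'a::{finite,field} KK \<Rightarrow> 'a KK" where
  "bfun d t = (\<Prod>j<d. t - theta ^ (card (UNIV :: 'a set) ^ j))"

definition ell :: "nat \<Rightarrow> 'a::{finite,field} KK" where
  "ell d = (\<Prod>j\<in>{1..d}. theta - theta ^ (card (UNIV :: 'a set) ^ j))"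

definition bracket :: "nat \<Rightarrow> 'a::{finite,field} KK" where
  "bracket d = theta ^ (card (UNIV :: 'a set) ^ d) - theta"

text \<open>chi_i(a) evaluated at t_i = t: the F_q-algebra map theta \<mapsto> t.\<close>
definition chi :: "'a::{finite,field} KK \<Rightarrow> 'a poly \<Rightarrow> 'a KK" where
  "chi t a = poly (map_poly (\<lambda>c. embA [:c:]) a) t"

definition Nop :: "nat \<Rightarrow> ('a::{finite,field} poly \<Rightarrow> 'a KK) \<Rightarrow> 'a KK \<Rightarrow> 'a KK" where
  "Nop d f z = (\<Sum>a\<in>Aset d. f a * ell d * Equot d (z - embA a))"

end

theory Submission
  imports Defs "HOL-Library.Cardinality"
begin

text \<open>Both sides are polynomials in \<open>z\<close> of degree \<open>< q^(d+1)\<close>, so it suffices that they agree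
  on \<open>A(d+1)\<close>. Newton interpolation gives \<open>N_i^(d+1) = N_i^(d) + b_i^(d) E_d\<close>, so the product of
  the \<open>N_i^(d+1)\<close> is a polynomial in \<open>E_d\<close> whose coefficient of \<open>E_d^l\<close> is the inner sum over \<open>\<alpha>\<close>.
  Since \<open>E_d^q = E_d + [d+1] E_(d+1)\<close>, subtracting the correction term replaces each \<open>E_d^l\<close> with
  \<open>l \<ge> q\<close> by \<open>E_d^(l-q+1)\<close>, and because \<open>s \<le> 2(q - 1)\<close> the result has degree \<open>< q^(d+1)\<close>.
  On \<open>A(d+1)\<close> the correction term vanishes with \<open>E_(d+1)\<close> and each \<open>N_i\<close> interpolates \<open>\<chi>_i\<close>,
  so there the right-hand side equals \<open>\<chi>_1 \<cdots> \<chi>_s\<close>.\<close>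

section \<open>Polynomial functions\<close>

definition polyfun :: "nat \<Rightarrow> ('b::field \<Rightarrow> 'b) \<Rightarrow> bool" where
  "polyfun n f \<longleftrightarrow> (\<exists>p. degree p \<le> n \<and> f = poly p)"

lemma polyfun_const: "polyfun n (\<lambda>x. c)"
  unfolding polyfun_def by (intro exI[of _ "[:c:]"]) auto

lemma polyfun_id: "polyfun 1 (\<lambda>x. x)"
  unfolding polyfun_def by (intro exI[of _ "[:0, 1:]"]) auto

lemma polyfun_mono: "polyfun m f \<Longrightarrow> m \<le> n \<Longrightarrow> polyfun n f"
  unfolding polyfun_def using order_trans by blast

lemma polyfun_binop:
  assumes "polyfun m f" "polyfun n g"
    and "\<And>p q. degree p \<le> m \<Longrightarrow> degree q \<le> n \<Longrightarrow> degree (h p q) \<le> k"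
    and "\<And>p q x. poly (h p q) x = F (poly p x) (poly q x)"
  shows "polyfun k (\<lambda>x. F (f x) (g x))"
proof -
  obtain p q where "degree p \<le> m" "f = poly p" "degree q \<le> n" "g = poly q"
    using assms(1,2) unfolding polyfun_def by blast
  thus ?thesis
    unfolding polyfun_def using assms(3,4) by (intro exI[of _ "h p q"]) auto
qed

lemma polyfun_add: "polyfun n f \<Longrightarrow> polyfun n g \<Longrightarrow> polyfun n (\<lambda>x. f x + g x)"
  by (erule polyfun_binop[where h = "(+)"]) (auto intro: order_trans[OF degree_add_le_max])

lemma polyfun_diff: "polyfun n f \<Longrightarrow> polyfun n g \<Longrightarrow> polyfun n (\<lambda>x. f x - g x)"
  by (erule polyfun_binop[where h = "(-)"]) (auto intro: order_trans[OF degree_diff_le_max])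

lemma polyfun_mult: "polyfun m f \<Longrightarrow> polyfun n g \<Longrightarrow> polyfun (m + n) (\<lambda>x. f x * g x)"
  by (erule polyfun_binop[where h = "(*)"]) (auto intro: order_trans[OF degree_mult_le])

lemma polyfun_cmult: "polyfun n f \<Longrightarrow> polyfun n (\<lambda>x. c * f x)"
  using polyfun_mult[OF polyfun_const[of 0 c]] by simp

lemma polyfun_linear: "polyfun 1 (\<lambda>x. x - c)"
  by (intro polyfun_diff polyfun_id polyfun_const)

lemma polyfun_sum:
  "finite S \<Longrightarrow> (\<And>i. i \<in> S \<Longrightarrow> polyfun n (f i)) \<Longrightarrow> polyfun n (\<lambda>x. \<Sum>i\<in>S. f i x)"
  by (induction S rule: finite_induct) (auto intro: polyfun_const polyfun_add)

lemma polyfun_prod: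
  "finite S \<Longrightarrow> (\<And>i. i \<in> S \<Longrightarrow> polyfun (g i) (f i)) \<Longrightarrow> polyfun (\<Sum>i\<in>S. g i) (\<lambda>x. \<Prod>i\<in>S. f i x)"
  by (induction S rule: finite_induct) (auto intro: polyfun_const polyfun_mult)

lemma polyfun_prod_linear: "finite S \<Longrightarrow> polyfun (card S) (\<lambda>x. \<Prod>i\<in>S. x - c i)"
  using polyfun_prod[of S "\<lambda>_. 1" "\<lambda>i x. x - c i"]
  by (simp add: polyfun_linear[unfolded One_nat_def])

lemma polyfun_power: "polyfun n f \<Longrightarrow> polyfun (k * n) (\<lambda>x. f x ^ k)"
  by (induction k) (auto intro: polyfun_const dest: polyfun_mult)

lemma polyfun_eqI:
  assumes "polyfun n f" "polyfun n g" "finite S" "n < card S" "\<And>x. x \<in> S \<Longrightarrow> f x = g x"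
  shows "f = g"
proof -
  obtain p q where "degree p \<le> n" "f = poly p" "degree q \<le> n" "g = poly q"
    using assms(1,2) unfolding polyfun_def by blast
  moreover from this have "p = q"
    using assms(3-5) by (intro poly_eqI_degree[of S]) auto
  ultimately show ?thesis
    by simp
qed

section \<open>Expanding a product of binomials\<close>

lemma sum_binary_eq_card:
  assumes "finite I" "\<alpha> \<in> I \<rightarrow>\<^sub>E {0::nat, 1}"
  shows "sum \<alpha> I = card {i\<in>I. \<alpha> i = 1}"
proof -
  have "sum \<alpha> I = (\<Sum>i\<in>I. if \<alpha> i = 1 then 1 else 0)"
    using assms(2) by (intro sum.cong refl) (auto simp: PiE_iff)
  also have "\<dots> = card (I \<inter> {i. \<alpha> i = 1})"
    using assms(1) by (simp add: sum.If_cases)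
  also have "I \<inter> {i. \<alpha> i = 1} = {i\<in>I. \<alpha> i = 1}"
    by blast
  finally show ?thesis .
qed

definition mixed_esym :: "'i set \<Rightarrow> ('i \<Rightarrow> 'b::comm_semiring_1) \<Rightarrow> ('i \<Rightarrow> 'b) \<Rightarrow> nat \<Rightarrow> 'b" where
  "mixed_esym I x y l =
     (\<Sum>\<alpha>\<in>{\<alpha>. \<alpha> \<in> I \<rightarrow>\<^sub>E {0::nat, 1} \<and> sum \<alpha> I = l}. \<Prod>i\<in>I. x i ^ (1 - \<alpha> i) * y i ^ \<alpha> i)"

lemma mixed_esym_eq_sum_subsets:
  assumes "finite I"
  shows "mixed_esym I x y l = (\<Sum>J\<in>{J. J \<subseteq> I \<and> card J = l}. (\<Prod>i\<in>J. y i) * (\<Prod>i\<in>I - J. x i))"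
  unfolding mixed_esym_def
proof (rule sum.reindex_bij_witness[where i = "\<lambda>J. \<lambda>i\<in>I. if i \<in> J then 1 else 0"
      and j = "\<lambda>\<alpha>. {i\<in>I. \<alpha> i = 1}"])
  fix \<alpha>
  assume "\<alpha> \<in> {\<alpha>. \<alpha> \<in> I \<rightarrow>\<^sub>E {0::nat, 1} \<and> sum \<alpha> I = l}"
  hence \<alpha>: "\<alpha> \<in> I \<rightarrow>\<^sub>E {0, 1}" "sum \<alpha> I = l"
    by auto
  let ?J = "{i\<in>I. \<alpha> i = 1}"
  have "(\<lambda>i\<in>I. if i \<in> ?J then 1 else 0) = restrict \<alpha> I"
    using \<alpha>(1) by (intro restrict_ext) (auto simp: PiE_iff)
  thus "(\<lambda>i\<in>I. if i \<in> ?J then 1 else 0) = \<alpha>"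
    using PiE_restrict[OF \<alpha>(1)] by simp
  show "?J \<in> {J. J \<subseteq> I \<and> card J = l}"
    using sum_binary_eq_card[OF assms \<alpha>(1)] \<alpha>(2) by auto
  have "(\<Prod>i\<in>I. x i ^ (1 - \<alpha> i) * y i ^ \<alpha> i) =
      (\<Prod>i\<in>I - ?J. x i ^ (1 - \<alpha> i) * y i ^ \<alpha> i) * (\<Prod>i\<in>?J. x i ^ (1 - \<alpha> i) * y i ^ \<alpha> i)"
    using assms by (intro prod.subset_diff) auto
  also have "\<dots> = (\<Prod>i\<in>I - ?J. x i) * (\<Prod>i\<in>?J. y i)"
    using \<alpha>(1) by (intro arg_cong2[where f = "(*)"] prod.cong) (auto simp: PiE_iff)
  finally show "(\<Prod>i\<in>?J. y i) * (\<Prod>i\<in>I - ?J. x i) = (\<Prod>i\<in>I. x i ^ (1 - \<alpha> i) * y i ^ \<alpha> i)"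
    by (simp add: mult.commute)
next
  fix J
  assume J: "J \<in> {J. J \<subseteq> I \<and> card J = l}"
  let ?\<alpha> = "\<lambda>i\<in>I. if i \<in> J then 1 else (0::nat)"
  show J_eq: "{i\<in>I. ?\<alpha> i = 1} = J"
    using J by auto
  have "?\<alpha> \<in> I \<rightarrow>\<^sub>E {0, 1}"
    by auto
  moreover from this have "sum ?\<alpha> I = l"
    using J sum_binary_eq_card[OF assms, of ?\<alpha>] by (simp only: J_eq) simp
  ultimately show "?\<alpha> \<in> {\<alpha>. \<alpha> \<in> I \<rightarrow>\<^sub>E {0::nat, 1} \<and> sum \<alpha> I = l}"
    by simp
qed

lemma prod_add_mult_expand:
  fixes x y :: "'i \<Rightarrow> 'b::comm_semiring_1"
  assumes "finite I"
  shows "(\<Prod>i\<in>I. x i + y i * e) = (\<Sum>l\<le>card I. e ^ l * mixed_esym I x y l)"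
proof -
  have "(\<Prod>i\<in>I. x i + y i * e) = (\<Sum>J\<in>Pow I. (\<Prod>i\<in>J. y i * e) * (\<Prod>i\<in>I - J. x i))"
    using prod_add[OF assms, of "\<lambda>i. y i * e" x] by (simp add: add.commute)
  also have "\<dots> = (\<Sum>J\<in>Pow I. e ^ card J * ((\<Prod>i\<in>J. y i) * (\<Prod>i\<in>I - J. x i)))"
    by (intro sum.cong refl) (simp add: prod.distrib algebra_simps)
  also have "\<dots> = (\<Sum>l\<le>card I. \<Sum>J\<in>{J\<in>Pow I. card J = l}.
      e ^ card J * ((\<Prod>i\<in>J. y i) * (\<Prod>i\<in>I - J. x i)))"
    using assms by (intro sum.group[symmetric]) (auto intro: card_mono)
  also have "\<dots> = (\<Sum>l\<le>card I. e ^ l *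
      (\<Sum>J\<in>{J. J \<subseteq> I \<and> card J = l}. (\<Prod>i\<in>J. y i) * (\<Prod>i\<in>I - J. x i)))"
    by (intro sum.cong refl) (auto simp: sum_distrib_left)
  finally show ?thesis
    by (simp add: mixed_esym_eq_sum_subsets[OF assms])
qed

lemma sum_powers_reduce:
  fixes e :: "'b::comm_ring_1"
  assumes "q \<ge> 1"
  shows "(\<Sum>l\<le>s. e ^ l * c l) - (e ^ q - e) * (\<Sum>l\<in>{q..s}. e ^ (l - q) * c l) =
         (\<Sum>l\<le>s. e ^ (if l < q then l else l - q + 1) * c l)"
proof -
  have "(\<Sum>l\<in>{q..s}. e ^ (l - q) * c l) = (\<Sum>l\<le>s. if q \<le> l then e ^ (l - q) * c l else 0)"
    by (intro sum.mono_neutral_cong_left) auto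
  moreover have "e ^ l * c l - (e ^ q - e) * (if q \<le> l then e ^ (l - q) * c l else 0) =
      e ^ (if l < q then l else l - q + 1) * c l" for l
  proof (cases "q \<le> l")
    case True
    hence "e ^ l = e ^ q * e ^ (l - q)" "e ^ (l - q + 1) = e * e ^ (l - q)"
      by (simp_all flip: power_add)
    thus ?thesis
      using True by (simp add: algebra_simps)
  qed simp
  ultimately show ?thesis
    by (simp add: sum_distrib_left flip: sum_subtractf)
qed

lemma reduced_exponent_bound:
  fixes q s l :: nat
  assumes "q \<ge> 2" "s \<le> 2 * (q - 1)" "l \<le> s"
  shows "(if l < q then l else l - q + 1) * q + (s - l) \<le> q * q - 1"
proof -
  obtain r where q: "q = Suc r" and "r \<ge> 1"
    using assms(1) by (cases q) auto
  show ?thesis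
  proof (cases "l < q")
    case True
    hence "l * r \<le> r * r"
      by (simp add: q)
    moreover have "(if l < q then l else l - q + 1) * q + (s - l) = l * r + s"
      using True assms(3) by (simp add: q algebra_simps)
    moreover have "q * q - 1 = r * r + 2 * r"
      by (simp add: q algebra_simps)
    ultimately show ?thesis
      using assms(2) q by linarith
  next
    case False
    hence "(l - r) * r \<le> r * r"
      using assms by (simp add: q)
    moreover have "l - q + 1 = l - r"
      using False by (simp add: q)
    ultimately show ?thesis
      using False assms by (simp add: q algebra_simps diff_mult_distrib)
  qed
qed

lemma polyfun_mixed_esym:
  fixes X :: "'i \<Rightarrow> 'b \<Rightarrow> 'b::field"
  assumes I: "finite I" and X: "\<And>i. i \<in> I \<Longrightarrow> polyfun m (X i)"
  shows "polyfun ((card I - l) * m) (\<lambda>z. mixed_esym I (\<lambda>i. X i z) y l)"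
  unfolding mixed_esym_def
proof (intro polyfun_sum)
  fix \<alpha>
  assume \<alpha>: "\<alpha> \<in> {\<alpha>. \<alpha> \<in> I \<rightarrow>\<^sub>E {0::nat, 1} \<and> sum \<alpha> I = l}"
  have "polyfun (\<Sum>i\<in>I. (1 - \<alpha> i) * m) (\<lambda>z. \<Prod>i\<in>I. X i z ^ (1 - \<alpha> i) * y i ^ \<alpha> i)"
  proof (intro polyfun_prod I)
    fix i
    assume "i \<in> I"
    hence "polyfun ((1 - \<alpha> i) * m) (\<lambda>z. X i z ^ (1 - \<alpha> i))"
      by (intro polyfun_power X)
    from polyfun_cmult[OF this, of "y i ^ \<alpha> i"]
    show "polyfun ((1 - \<alpha> i) * m) (\<lambda>z. X i z ^ (1 - \<alpha> i) * y i ^ \<alpha> i)"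
      by (simp only: mult.commute)
  qed
  moreover have "(\<Sum>i\<in>I. 1 - \<alpha> i) = card I - l"
    using \<alpha> by (subst sum_subtractf_nat) (auto simp: PiE_iff)
  ultimately show "polyfun ((card I - l) * m) (\<lambda>z. \<Prod>i\<in>I. X i z ^ (1 - \<alpha> i) * y i ^ \<alpha> i)"
    by (simp flip: sum_distrib_right)
next
  show "finite {\<alpha>. \<alpha> \<in> I \<rightarrow>\<^sub>E {0::nat, 1} \<and> sum \<alpha> I = l}"
    using I by (intro finite_subset[OF _ finite_PiE[of I "\<lambda>_. {0::nat, 1}"]]) auto
qed

lemma polyfun_reduced_expansion:
  fixes E :: "'b::field \<Rightarrow> 'b" and X :: "'i \<Rightarrow> 'b \<Rightarrow> 'b"
  assumes q: "q \<ge> 2" and card: "card I \<le> 2 * (q - 1)" and I: "finite I" and m: "m \<ge> 1"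
    and E: "polyfun (q * m) E" and X: "\<And>i. i \<in> I \<Longrightarrow> polyfun m (X i)"
  shows "polyfun (q * q * m - 1)
           (\<lambda>z. \<Sum>l\<le>card I. E z ^ (if l < q then l else l - q + 1) * mixed_esym I (\<lambda>i. X i z) y l)"
proof (intro polyfun_sum)
  fix l
  assume l: "l \<in> {..card I}"
  let ?f = "if l < q then l else l - q + 1"
  have "polyfun (?f * (q * m) + (card I - l) * m) (\<lambda>z. E z ^ ?f * mixed_esym I (\<lambda>i. X i z) y l)"
    by (intro polyfun_mult polyfun_power E polyfun_mixed_esym I X)
  moreover have "?f * (q * m) + (card I - l) * m \<le> q * q * m - 1"
  proof -
    have "?f * (q * m) + (card I - l) * m = (?f * q + (card I - l)) * m"
      by (simp add: algebra_simps)
    also have "\<dots> \<le> (q * q - 1) * m"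
      using reduced_exponent_bound[OF q card] l by (intro mult_right_mono) auto
    also have "\<dots> \<le> q * q * m - 1"
      using m by (simp add: diff_mult_distrib)
    finally show ?thesis .
  qed
  ultimately show "polyfun (q * q * m - 1) (\<lambda>z. E z ^ ?f * mixed_esym I (\<lambda>i. X i z) y l)"
    by (rule polyfun_mono)
qed simp

section \<open>The embedding of \<open>A\<close> into \<open>K\<close>\<close>

lemma embA_add [simp]: "embA (a + b) = embA a + embA b"
  by (simp add: embA_def)

lemma embA_mult [simp]: "embA (a * b) = embA a * embA b"
  by (simp add: embA_def)

lemma embA_0 [simp]: "embA 0 = 0"
  by (simp add: embA_def Zero_fract_def)

lemma embA_1 [simp]: "embA 1 = 1"
  by (simp add: embA_def One_fract_def)

lemma embA_minus [simp]: "embA (- a) = - embA a"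
  by (simp add: embA_def)

lemma embA_diff [simp]: "embA (a - b) = embA a - embA b"
  by (simp add: embA_def)

lemma embA_eq_iff [simp]: "embA a = embA b \<longleftrightarrow> a = b"
  by (simp add: embA_def eq_fract)

lemma embA_eq_0_iff [simp]: "embA a = 0 \<longleftrightarrow> a = 0"
  using embA_eq_iff[of a 0] by simp

lemma embA_power [simp]: "embA (a ^ n) = embA a ^ n"
  by (induction n) simp_all

lemma embA_sum: "embA (sum f S) = (\<Sum>x\<in>S. embA (f x))"
  by (induction S rule: infinite_finite_induct) simp_all

lemma embA_of_nat [simp]: "embA (of_nat n) = of_nat n"
  by (induction n) simp_all

abbreviation embF :: "'a::{finite,field} \<Rightarrow> 'a KK" where
  "embF c \<equiv> embA [:c:]"

lemma theta_power: "theta ^ n = embA (monom 1 n)"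
  by (simp add: theta_def monom_altdef)

lemma theta_power_eq_iff: "theta ^ m = (theta ^ n :: 'a::{finite,field} KK) \<longleftrightarrow> m = n"
  by (auto simp: theta_power monom_eq_iff')

lemma embA_monom: "embA (monom c n) = embF c * theta ^ n"
  by (simp add: theta_power flip: embA_mult) (simp add: smult_monom)

lemma embA_altdef: "embA a = (\<Sum>i\<le>degree a. embF (coeff a i) * theta ^ i)"
  by (subst poly_as_sum_of_monoms[symmetric]) (simp add: embA_sum embA_monom)

section \<open>The Frobenius map of \<open>K\<close>\<close>

lemma card_UNIV_ge_2: "card (UNIV :: 'a::{finite,field} set) \<ge> 2"
  using card_mono[of "UNIV :: 'a set" "{0, 1}"] by simp

lemma mult_power_card_minus_1:
  "(x :: 'b::monoid_mult) * x ^ (card (UNIV :: 'a::{finite,field} set) - 1) = x ^ CARD('a)"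
  using card_UNIV_ge_2[where 'a = 'a] by (simp flip: power_Suc)

lemma power_card_eq: "(x :: 'a::{finite,field}) ^ CARD('a) = x"
proof (cases "x = 0")
  case False
  have "x * (\<Prod>y\<in>UNIV - {0}. x * y) = x * x ^ (CARD('a) - 1) * \<Prod>(UNIV - {0})"
    by (simp add: prod.distrib mult_ac)
  also have "x * x ^ (CARD('a) - 1) = x ^ CARD('a)"
    by (rule mult_power_card_minus_1)
  also have "(\<Prod>y\<in>UNIV - {0}. x * y) = (\<Prod>y\<in>UNIV - {0}. y)"
    by (rule prod.reindex_bij_witness[of _ "\<lambda>y. y / x" "\<lambda>y. x * y"]) (use False in auto)
  finally show ?thesis
    by simp
qed (use card_UNIV_ge_2[where 'a = 'a] in auto)

text \<open>The polynomial \<open>(X + 1)^q - X^q - 1\<close> has degree \<open>< q\<close> and vanishes on all of \<open>F_q\<close>, so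
  its coefficients, the binomial coefficients \<open>q choose k\<close> with \<open>0 < k < q\<close>, are zero.\<close>
lemma of_nat_card_choose_eq_0:
  assumes "0 < k" "k < CARD('a)"
  shows "(of_nat (CARD('a) choose k) :: 'a::{finite,field}) = 0"
proof -
  let ?q = "CARD('a)"
  define P :: "'a poly" where "P = [:1, 1:] ^ ?q - monom 1 ?q - 1"
  have "coeff P i = 0" if "i \<ge> ?q" for i
    using that card_UNIV_ge_2[where 'a = 'a]
    by (cases "i = ?q")
       (auto simp: P_def coeff_monom coeff_linear_poly_power coeff_eq_0 degree_linear_power)
  hence "degree P < ?q"
    using card_UNIV_ge_2[where 'a = 'a] by (intro le_less_trans[OF degree_le[of "?q - 1"]]) auto
  moreover have "poly P x = 0" for x
    by (simp add: P_def poly_monom power_card_eq)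
  ultimately have "P = 0"
    by (intro poly_eqI_degree[of UNIV]) auto
  hence "coeff P k = 0"
    by simp
  thus ?thesis
    using assms by (simp add: P_def coeff_monom coeff_linear_poly_power)
qed

lemma power_card_add: "(x + y :: 'a::{finite,field} KK) ^ CARD('a) = x ^ CARD('a) + y ^ CARD('a)"
proof -
  let ?q = "CARD('a)"
  have "(of_nat (?q choose k) :: 'a KK) = 0" if "0 < k" "k < ?q" for k
    using of_nat_card_choose_eq_0[OF that]
    by (metis embA_of_nat embA_0 of_nat_poly pCons_0_0)
  hence "(x + y) ^ ?q = (\<Sum>k\<in>{0, ?q}. of_nat (?q choose k) * x ^ k * y ^ (?q - k))"
    unfolding binomial_ring by (intro sum.mono_neutral_right) auto
  thus ?thesis
    using card_UNIV_ge_2[where 'a = 'a] by (simp add: add.commute)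
qed

lemma power_card_minus: "(- x :: 'a::{finite,field} KK) ^ CARD('a) = - (x ^ CARD('a))"
proof -
  have "x ^ CARD('a) + (- x) ^ CARD('a) = 0"
    using power_card_add[of x "- x"] card_UNIV_ge_2[where 'a = 'a] by (simp add: power_0_left)
  thus ?thesis
    by (metis neg_eq_iff_add_eq_0)
qed

lemma power_card_diff: "(x - y :: 'a::{finite,field} KK) ^ CARD('a) = x ^ CARD('a) - y ^ CARD('a)"
  using power_card_add[of x "- y"] by (simp add: power_card_minus)

lemma power_card_sum: "(sum f S :: 'a::{finite,field} KK) ^ CARD('a) = (\<Sum>i\<in>S. f i ^ CARD('a))"
  using card_UNIV_ge_2[where 'a = 'a]
  by (induction S rule: infinite_finite_induct) (simp_all add: power_card_add)

lemma embF_power_card: "embF (c :: 'a::{finite,field}) ^ CARD('a) = embF c"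
  by (simp flip: embA_power add: poly_const_pow power_card_eq)

lemma prod_pCons_field_elems:
  "(\<Prod>c\<in>UNIV. [:- embF c, 1:]) = (monom 1 CARD('a) - [:0, 1:] :: 'a::{finite,field} KK poly)"
proof (rule poly_eqI_degree_lead_coeff[of _ "CARD('a)" _ "range embF"])
  show "coeff (\<Prod>c\<in>UNIV. [:- embF c, 1:]) CARD('a) =
      coeff (monom 1 CARD('a) - [:0, 1:] :: 'a KK poly) CARD('a)"
  proof -
    have "degree (\<Prod>c\<in>(UNIV :: 'a set). [:- embF c, 1:]) = CARD('a)"
      by (simp add: degree_prod_eq_sum_degree)
    moreover have "lead_coeff (\<Prod>c\<in>(UNIV :: 'a set). [:- embF c, 1:]) = 1"
      by (simp add: lead_coeff_prod)
    ultimately have "coeff (\<Prod>c\<in>(UNIV :: 'a set). [:- embF c, 1:]) CARD('a) = 1"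
      by simp
    moreover have "coeff [:0, 1 :: 'a KK:] CARD('a) = 0"
      using card_UNIV_ge_2[where 'a = 'a] by (simp add: coeff_pCons split: nat.split)
    ultimately show ?thesis
      by simp
  qed
  show "degree (\<Prod>c\<in>(UNIV :: 'a set). [:- embF c, 1:]) \<le> CARD('a)"
    by (simp add: degree_prod_eq_sum_degree)
  show "degree (monom 1 CARD('a) - [:0, 1:] :: 'a KK poly) \<le> CARD('a)"
    using card_UNIV_ge_2[where 'a = 'a]
    by (intro order_trans[OF degree_diff_le_max]) (auto simp: degree_monom_le)
  show "CARD('a) \<le> card (range (embF :: 'a \<Rightarrow> 'a KK))"
    by (subst card_image) (auto simp: inj_on_def)
  fix z :: "'a KK"
  assume "z \<in> range embF"
  thus "poly (\<Prod>c\<in>UNIV. [:- embF c, 1:]) z = poly (monom 1 CARD('a) - [:0, 1:]) z"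
    by (auto simp: poly_prod poly_monom embF_power_card)
qed

lemma prod_minus_field_elems: "(\<Prod>c\<in>UNIV. Y - embF c) = Y ^ CARD('a) - (Y :: 'a::{finite,field} KK)"
  using arg_cong[OF prod_pCons_field_elems, of "\<lambda>p. poly p Y"] by (simp add: poly_prod poly_monom)

text \<open>Wilson's theorem for \<open>F_q\<close>, read off from \<open>X \<cdot> \<Prod>_(c \<noteq> 0) (X - c) = X^q - X\<close>
  by cancelling \<open>X\<close>.\<close>
lemma prod_uminus_field_elems: "(\<Prod>c\<in>UNIV - {0}. - embF c) = (-1 :: 'a::{finite,field} KK)"
proof -
  let ?X = "[:0, 1:] :: 'a KK poly"
  have "?X * (\<Prod>c\<in>UNIV - {0 :: 'a}. [:- embF c, 1:]) = (\<Prod>c\<in>UNIV. [:- embF c, 1:])"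
    by (simp add: prod.remove[of UNIV 0])
  also have "\<dots> = ?X * (monom 1 (CARD('a) - 1) - 1)"
    using card_UNIV_ge_2[where 'a = 'a]
    by (simp add: prod_pCons_field_elems right_diff_distrib monom_altdef flip: power_Suc)
  finally have "(\<Prod>c\<in>UNIV - {0 :: 'a}. [:- embF c, 1:]) = monom 1 (CARD('a) - 1) - 1"
    by simp
  from arg_cong[OF this, of "\<lambda>p. poly p 0"] show ?thesis
    using card_UNIV_ge_2[where 'a = 'a] by (simp add: poly_prod poly_monom)
qed

lemma prod_minus_field_elems_scaled:
  "(\<Prod>c\<in>UNIV. Y - embF c * D) = Y ^ CARD('a) - D ^ (CARD('a) - 1) * (Y :: 'a::{finite,field} KK)"
proof (cases "D = 0")
  case False
  have "(\<Prod>c\<in>UNIV. Y - embF c * D) = (\<Prod>c\<in>(UNIV :: 'a set). D * (Y / D - embF c))"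
    using False by (intro prod.cong) (auto simp: field_simps)
  also have "\<dots> = D ^ CARD('a) * ((Y / D) ^ CARD('a) - Y / D)"
    by (simp add: prod.distrib prod_minus_field_elems)
  also have "\<dots> = Y ^ CARD('a) - D ^ (CARD('a) - 1) * Y"
    using False mult_power_card_minus_1[of D, where 'a = 'a] by (simp add: power_divide field_simps)
  finally show ?thesis .
qed (use card_UNIV_ge_2[where 'a = 'a] in simp)

section \<open>The sets \<open>A(d)\<close> and the products \<open>D_d\<close>\<close>

lemma Aset_coeff: "a \<in> Aset d \<longleftrightarrow> (\<forall>i\<ge>d. coeff a i = 0)"
proof
  assume "\<forall>i\<ge>d. coeff a i = 0"
  hence "a = 0 \<or> degree a < d"
    by (metis leading_coeff_0_iff not_le)
  thus "a \<in> Aset d"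
    by (simp add: Aset_def)
qed (auto simp: Aset_def intro: coeff_eq_0)

lemma Aset_0 [simp]: "0 \<in> Aset d"
  by (simp add: Aset_def)

lemma Aset_diff: "a \<in> Aset d \<Longrightarrow> b \<in> Aset d \<Longrightarrow> a - b \<in> Aset d"
  by (simp add: Aset_coeff)

lemma Aset_monom: "k < d \<Longrightarrow> monom c k \<in> Aset d"
  by (simp add: Aset_coeff coeff_monom)

lemma Aset_zero_eq: "Aset 0 = {0 :: 'a::{finite,field} poly}"
  by (auto simp: Aset_def)

lemma Aset_Suc: "Aset (Suc d) = (\<lambda>(c, b). monom c d + b) ` (UNIV \<times> Aset d)"
proof (intro equalityI subsetI)
  fix a :: "'a poly"
  assume a: "a \<in> Aset (Suc d)"
  have "a - monom (coeff a d) d \<in> Aset d"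
    using a by (auto simp: Aset_coeff coeff_monom)
  thus "a \<in> (\<lambda>(c, b). monom c d + b) ` (UNIV \<times> Aset d)"
    by (intro image_eqI[of _ _ "(coeff a d, a - monom (coeff a d) d)"]) auto
qed (auto simp: Aset_coeff coeff_monom)

lemma inj_on_Aset_Suc: "inj_on (\<lambda>(c, b). monom c d + b) (UNIV \<times> Aset d)"
proof (rule inj_onI, clarify)
  fix c b c' b'
  assume b: "b \<in> Aset d" "b' \<in> Aset d" and eq: "monom c d + b = monom c' d + b'"
  have "coeff (monom c d + b) d = coeff (monom c' d + b') d"
    using eq by simp
  hence "c = c'"
    using b by (simp add: Aset_coeff)
  with eq show "c = c' \<and> b = b'"
    by simp
qed

lemma finite_Aset [simp]: "finite (Aset d :: 'a::{finite,field} poly set)"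
  by (induction d) (simp_all add: Aset_zero_eq Aset_Suc)

lemma card_Aset: "card (Aset d :: 'a::{finite,field} poly set) = CARD('a) ^ d"
  by (induction d)
     (simp_all add: Aset_zero_eq Aset_Suc card_image[OF inj_on_Aset_Suc] card_cartesian_product)

lemma card_embA_Aset: "card (embA ` Aset d :: 'a::{finite,field} KK set) = CARD('a) ^ d"
  by (subst card_image) (auto simp: inj_on_def card_Aset)

lemma prod_Aset_Suc:
  "(\<Prod>a\<in>Aset (Suc d). f a) = (\<Prod>c\<in>UNIV. \<Prod>b\<in>Aset d. f (monom c d + b))"
  unfolding Aset_Suc prod.reindex[OF inj_on_Aset_Suc]
  by (simp add: prod.cartesian_product case_prod_unfold)

lemma prod_Aset_Suc_nonzero:
  "(\<Prod>a\<in>Aset (Suc d) - {0}. f a) =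
     (\<Prod>b\<in>Aset d - {0}. f b) * (\<Prod>c\<in>UNIV - {0}. \<Prod>b\<in>Aset d. f (monom c d + b))"
proof -
  let ?g = "\<lambda>(c, b). monom c d + b"
  have "Aset (Suc d) - {0} = ?g ` (UNIV \<times> Aset d) - ?g ` {(0, 0)}"
    by (simp add: Aset_Suc)
  also have "\<dots> = ?g ` (UNIV \<times> Aset d - {(0, 0)})"
    by (rule inj_on_image_set_diff[symmetric, OF inj_on_Aset_Suc]) auto
  also have "UNIV \<times> Aset d - {(0, 0)} = {0} \<times> (Aset d - {0}) \<union> (UNIV - {0}) \<times> Aset d"
    by auto
  finally have split: "Aset (Suc d) - {0} = ?g ` ({0} \<times> (Aset d - {0}) \<union> (UNIV - {0}) \<times> Aset d)" .
  have "(\<Prod>a\<in>Aset (Suc d) - {0}. f a) =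
      (\<Prod>p\<in>{0} \<times> (Aset d - {0}) \<union> (UNIV - {0}) \<times> Aset d. f (?g p))"
    unfolding split
    by (rule prod.reindex[unfolded comp_def], rule inj_on_subset[OF inj_on_Aset_Suc]) auto
  also have "\<dots> = (\<Prod>p\<in>{0} \<times> (Aset d - {0}). f (?g p)) * (\<Prod>p\<in>(UNIV - {0}) \<times> Aset d. f (?g p))"
    by (intro prod.union_disjoint) auto
  finally show ?thesis
    by (simp add: prod.case_distrib prod.cartesian_product[symmetric])
qed

lemma monic_eq_Aset:
  "{p :: 'a::{finite,field} poly. lead_coeff p = 1 \<and> degree p = d} = (\<lambda>a. monom 1 d - a) ` Aset d"
proof (intro equalityI subsetI)
  fix p :: "'a poly"
  assume "p \<in> {p. lead_coeff p = 1 \<and> degree p = d}"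
  hence "monom 1 d - p \<in> Aset d"
    by (auto simp: Aset_coeff coeff_monom le_less intro: coeff_eq_0)
  thus "p \<in> (\<lambda>a. monom 1 d - a) ` Aset d"
    by (intro image_eqI[of _ _ "monom 1 d - p"]) auto
next
  fix p :: "'a poly"
  assume "p \<in> (\<lambda>a. monom 1 d - a) ` Aset d"
  then obtain a where a: "a \<in> Aset d" "p = monom 1 d - a"
    by auto
  hence "coeff p d = 1" "\<forall>i>d. coeff p i = 0"
    by (simp_all add: Aset_coeff coeff_monom)
  moreover from this have "degree p = d"
    by (metis degree_le le_antisym le_degree one_neq_zero)
  ultimately show "p \<in> {p. lead_coeff p = 1 \<and> degree p = d}"
    by simp
qed

lemma Dprod_eq: "Dprod d = (\<Prod>a\<in>Aset d. theta ^ d - embA a :: 'a::{finite,field} KK)"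
  unfolding Dprod_def monic_eq_Aset
  by (subst prod.reindex) (auto simp: inj_on_def theta_power)

lemma Dprod_nonzero: "Dprod d \<noteq> (0 :: 'a::{finite,field} KK)"
proof -
  have "monom (1 :: 'a) d \<notin> Aset d"
    by (simp add: Aset_coeff)
  hence "theta ^ d - embA a \<noteq> (0 :: 'a KK)" if "a \<in> Aset d" for a
    using that by (auto simp: theta_power)
  thus ?thesis
    unfolding Dprod_eq by simp
qed

lemma Dprod_0: "Dprod 0 = (1 :: 'a::{finite,field} KK)"
  by (simp add: Dprod_eq Aset_zero_eq)

section \<open>The Carlitz polynomials \<open>E_d\<close>\<close>

definition Fq_linear :: "('a::{finite,field} KK \<Rightarrow> 'a KK) \<Rightarrow> bool" where
  "Fq_linear f \<longleftrightarrow> (\<forall>x y. f (x + y) = f x + f y) \<and> (\<forall>c x. f (embF c * x) = embF c * f x)"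

lemma Fq_linear_add: "Fq_linear f \<Longrightarrow> f (x + y) = f x + f y"
  by (simp add: Fq_linear_def)

lemma Fq_linear_embF_mult: "Fq_linear f \<Longrightarrow> f (embF c * x) = embF c * f x"
  by (simp add: Fq_linear_def)

lemma Fq_linear_minus:
  assumes "Fq_linear f"
  shows "f (- x) = - f (x :: 'a::{finite,field} KK)"
proof -
  have "embF (- 1 :: 'a) = - 1"
    by (metis embA_1 embA_minus one_pCons minus_pCons minus_zero)
  thus ?thesis
    using Fq_linear_embF_mult[OF assms, of "- 1" x] by simp
qed

lemma Fq_linear_diff: "Fq_linear f \<Longrightarrow> f (x - y) = f x - f y"
  using Fq_linear_add[of f x "- y"] Fq_linear_minus[of f y] by simp

lemma Fq_linear_power_card_diff:
  assumes "Fq_linear f"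
  shows "Fq_linear (\<lambda>x. f x ^ CARD('a) - D * f x :: 'a::{finite,field} KK)"
  using assms
  by (simp add: Fq_linear_def power_card_add power_mult_distrib embF_power_card algebra_simps)

definition efun :: "nat \<Rightarrow> 'a::{finite,field} KK \<Rightarrow> 'a KK" where
  "efun d x = (\<Prod>a\<in>Aset d. x - embA a)"

lemma Efun_eq_efun: "Efun d x = inverse (Dprod d) * efun d x"
  by (simp add: Efun_def efun_def)

lemma efun_0: "efun 0 x = x"
  by (simp add: efun_def Aset_zero_eq)

lemma efun_theta_power: "efun d (theta ^ d) = Dprod d"
  by (simp add: efun_def Dprod_eq)

lemma efun_embA: "a \<in> Aset d \<Longrightarrow> efun d (embA a) = 0"
  by (auto simp: efun_def)

lemma efun_Suc_if_Fq_linear: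
  assumes "Fq_linear (efun d :: 'a::{finite,field} KK \<Rightarrow> 'a KK)"
  shows "efun (Suc d) x = efun d x ^ CARD('a) - Dprod d ^ (CARD('a) - 1) * efun d (x :: 'a KK)"
proof -
  have "efun (Suc d) x = (\<Prod>c\<in>(UNIV :: 'a set). efun d (x - embF c * theta ^ d))"
    unfolding efun_def prod_Aset_Suc by (simp add: embA_monom algebra_simps)
  also have "\<dots> = (\<Prod>c\<in>UNIV. efun d x - embF c * Dprod d)"
    by (simp add: Fq_linear_diff[OF assms] Fq_linear_embF_mult[OF assms] efun_theta_power)
  finally show ?thesis
    by (simp add: prod_minus_field_elems_scaled)
qed

lemma Fq_linear_efun: "Fq_linear (efun d)"
proof (induction d)
  case 0
  show ?case
    by (simp add: Fq_linear_def efun_0)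
next
  case (Suc d)
  thus ?case
    using Fq_linear_power_card_diff[OF Suc] by (simp add: efun_Suc_if_Fq_linear[OF Suc] fun_eq_iff)
qed

lemmas efun_Suc = efun_Suc_if_Fq_linear[OF Fq_linear_efun]

lemma Efun_0: "Efun 0 x = x"
  by (simp add: Efun_eq_efun Dprod_0 efun_0)

lemma Efun_theta_power: "Efun d (theta ^ d) = 1"
  by (simp add: Efun_eq_efun efun_theta_power Dprod_nonzero)

lemma Efun_embA: "a \<in> Aset d \<Longrightarrow> Efun d (embA a) = 0"
  by (simp add: Efun_eq_efun efun_embA)

lemma Efun_Suc_theta_power: "Efun (Suc d) (theta ^ d) = 0"
  using Efun_embA[OF Aset_monom[of d "Suc d" 1]] by (simp add: theta_power)

lemma Efun_power_card_diff:
  "Efun d x ^ CARD('a) - Efun d x =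
     Dprod (Suc d) / Dprod d ^ CARD('a) * Efun (Suc d) (x :: 'a::{finite,field} KK)"
  using mult_power_card_minus_1[of "Dprod d :: 'a KK", where 'a = 'a]
    Dprod_nonzero[of d, where 'a = 'a] Dprod_nonzero[of "Suc d", where 'a = 'a]
  by (simp add: Efun_eq_efun efun_Suc power_divide field_simps)

lemma bracket_nonzero: "d \<ge> 1 \<Longrightarrow> bracket d \<noteq> (0 :: 'a::{finite,field} KK)"
  using card_UNIV_ge_2[where 'a = 'a]
  by (auto simp: bracket_def theta_power_eq_iff[of _ 1, simplified])

lemma bracket_Suc: "bracket (Suc d) = bracket d ^ CARD('a) + (bracket 1 :: 'a::{finite,field} KK)"
proof -
  have "(theta ^ CARD('a) ^ d) ^ CARD('a) = (theta ^ CARD('a) ^ Suc d :: 'a KK)"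
    by (simp add: mult.commute flip: power_mult)
  thus ?thesis
    by (simp add: bracket_def power_card_diff)
qed

lemma Efun_theta_mult_step:
  fixes x :: "'a::{finite,field} KK"
  assumes Dprod_k: "Dprod (Suc k) = bracket (Suc k) * (Dprod k :: 'a KK) ^ CARD('a)"
    and Efun_k: "\<And>y :: 'a KK.
      Efun (Suc k) (theta * y) = theta * Efun (Suc k) y + Efun k y ^ CARD('a)"
  shows "Dprod (Suc (Suc k)) / Dprod (Suc k) ^ CARD('a) *
           (Efun (Suc (Suc k)) (theta * x) - theta * Efun (Suc (Suc k)) x) =
         bracket (Suc (Suc k)) * Efun (Suc k) x ^ CARD('a)"
proof -
  let ?q = "CARD('a)"
  define Y where "Y = Efun (Suc k) x"
  define Z where "Z = Efun k x"
  have ZY: "Z ^ ?q - Z = bracket (Suc k) * Y"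
    using Efun_power_card_diff[of k x] Dprod_nonzero[of k, where 'a = 'a]
    by (simp add: Y_def Z_def Dprod_k)
  have "Dprod (Suc (Suc k)) / Dprod (Suc k) ^ ?q *
        (Efun (Suc (Suc k)) (theta * x) - theta * Efun (Suc (Suc k)) x)
      = (Efun (Suc k) (theta * x) ^ ?q - Efun (Suc k) (theta * x)) - theta * (Y ^ ?q - Y)"
    by (simp add: Y_def Efun_power_card_diff right_diff_distrib mult.left_commute)
  also have "\<dots> = ((theta * Y + Z ^ ?q) ^ ?q - (theta * Y + Z ^ ?q)) - theta * (Y ^ ?q - Y)"
    by (simp add: Y_def Z_def Efun_k)
  also have "\<dots> = bracket 1 * Y ^ ?q + (Z ^ ?q - Z) ^ ?q"
    by (simp add: power_card_add power_card_diff power_mult_distrib bracket_def algebra_simps)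
  also have "\<dots> = bracket (Suc (Suc k)) * Y ^ ?q"
    by (simp add: ZY bracket_Suc[of "Suc k"] power_mult_distrib algebra_simps)
  finally show ?thesis
    by (simp add: Y_def)
qed

text \<open>The recursion for \<open>D_d\<close> is proved together with the Carlitz relation
  \<open>E_(k+1)(\<theta>x) = \<theta> E_(k+1)(x) + E_k(x)^q\<close>: evaluating the relation at \<open>x = \<theta>^(k+1)\<close> determines
  \<open>D_(k+2) / D_(k+1)^q\<close>, which in turn yields the next instance of the relation.\<close>
lemma Dprod_Suc_and_Efun_theta_mult:
  "Dprod (Suc k) = bracket (Suc k) * (Dprod k :: 'a::{finite,field} KK) ^ CARD('a) \<and>
   (\<forall>x :: 'a KK. Efun (Suc k) (theta * x) = theta * Efun (Suc k) x + Efun k x ^ CARD('a))"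
proof (induction k)
  case 0
  have efun_1: "efun (Suc 0) x = x ^ CARD('a) - (x :: 'a KK)" for x
    using efun_Suc[of 0 x] by (simp add: efun_0 Dprod_0)
  have Dprod_1: "Dprod (Suc 0) = (bracket (Suc 0) :: 'a KK)"
    using efun_theta_power[of "Suc 0", where 'a = 'a] by (simp add: efun_1 bracket_def)
  have "bracket (Suc 0) \<noteq> (0 :: 'a KK)"
    by (simp add: bracket_nonzero)
  thus ?case
    by (simp add: Dprod_1 Dprod_0 Efun_eq_efun efun_1 efun_0 field_simps power_mult_distrib)
       (simp add: bracket_def algebra_simps)
next
  case (Suc k)
  have step: "Dprod (Suc (Suc k)) / Dprod (Suc k) ^ CARD('a) *
      (Efun (Suc (Suc k)) (theta * x) - theta * Efun (Suc (Suc k)) x) =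
      bracket (Suc (Suc k)) * Efun (Suc k) x ^ CARD('a)" for x :: "'a KK"
    using Suc by (intro Efun_theta_mult_step) auto
  from step[of "theta ^ Suc k"]
  have ratio: "Dprod (Suc (Suc k)) / Dprod (Suc k) ^ CARD('a) = (bracket (Suc (Suc k)) :: 'a KK)"
    by (simp add: Efun_theta_power Efun_Suc_theta_power flip: power_Suc)
  have "bracket (Suc (Suc k)) \<noteq> (0 :: 'a KK)"
    by (simp add: bracket_nonzero)
  hence "Efun (Suc (Suc k)) (theta * x) - theta * Efun (Suc (Suc k)) x = Efun (Suc k) x ^ CARD('a)"
    for x :: "'a KK"
    using step[of x] by (simp add: ratio)
  hence "Efun (Suc (Suc k)) (theta * x) = theta * Efun (Suc (Suc k)) x + Efun (Suc k) x ^ CARD('a)"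
    for x :: "'a KK"
    by (simp add: diff_eq_eq add.commute)
  moreover have "Dprod (Suc (Suc k)) = bracket (Suc (Suc k)) * (Dprod (Suc k) :: 'a KK) ^ CARD('a)"
    using ratio Dprod_nonzero[of "Suc k", where 'a = 'a] by (simp add: field_simps)
  ultimately show ?case
    by blast
qed

lemma Dprod_Suc: "Dprod (Suc d) = bracket (Suc d) * (Dprod d :: 'a::{finite,field} KK) ^ CARD('a)"
  using Dprod_Suc_and_Efun_theta_mult by blast

lemma Efun_power_card:
  "Efun d x ^ CARD('a) = Efun d x + bracket (Suc d) * Efun (Suc d) (x :: 'a::{finite,field} KK)"
  using Efun_power_card_diff[of d x] Dprod_nonzero[of d, where 'a = 'a]
  by (simp add: Dprod_Suc algebra_simps)

section \<open>Lagrange interpolation on \<open>A(d)\<close>\<close>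

lemma ell_Suc: "ell (Suc d) = - ell d * (bracket (Suc d) :: 'a::{finite,field} KK)"
  by (simp add: ell_def bracket_def algebra_simps)

lemma prod_uminus_Aset_mult_ell:
  "(\<Prod>c\<in>Aset d - {0}. - embA c) * ell d = (Dprod d :: 'a::{finite,field} KK)"
proof (induction d)
  case 0
  show ?case
    by (simp add: ell_def Dprod_0 Aset_zero_eq)
next
  case (Suc d)
  have inner: "(\<Prod>b\<in>Aset d. - embA (monom c d + b)) = - embF c * (Dprod d :: 'a KK)" for c :: 'a
  proof -
    have "(\<Prod>b\<in>Aset d. - embA (monom c d + b)) = efun d (- (embF c * theta ^ d))"
      unfolding efun_def by (intro prod.cong refl) (simp add: embA_monom algebra_simps)
    thus ?thesis
      by (simp add: Fq_linear_minus Fq_linear_embF_mult Fq_linear_efun efun_theta_power)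
  qed
  have "(\<Prod>c\<in>UNIV - {0}. \<Prod>b\<in>Aset d. - embA (monom c d + b)) =
      (\<Prod>c\<in>UNIV - {0 :: 'a}. - embF c * Dprod d)"
    by (simp only: inner)
  also have "\<dots> = - (Dprod d ^ (CARD('a) - 1))"
    by (simp only: prod.distrib prod_uminus_field_elems prod_constant)
       (simp add: card_Diff_singleton)
  finally have "(\<Prod>c\<in>Aset (Suc d) - {0}. - embA c) =
      - (\<Prod>c\<in>Aset d - {0}. - embA c) * (Dprod d :: 'a KK) ^ (CARD('a) - 1)"
    by (simp add: prod_Aset_Suc_nonzero)
  thus ?case
    using mult_power_card_minus_1[of "Dprod d :: 'a KK", where 'a = 'a]
    by (simp add: ell_Suc Dprod_Suc algebra_simps flip: Suc.IH)
qed

lemma ell_mult_Equot_embA_diff: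
  assumes "a \<in> Aset d" "b \<in> Aset d"
  shows "ell d * Equot d (embA b - embA a) = (if a = b then 1 else (0 :: 'a::{finite,field} KK))"
proof (cases "a = b")
  case True
  have "ell d * Equot d 0 = (\<Prod>c\<in>Aset d - {0}. - embA c) * ell d / (Dprod d :: 'a KK)"
    by (simp add: Equot_def field_simps)
  thus ?thesis
    using True by (simp add: prod_uminus_Aset_mult_ell Dprod_nonzero)
next
  case False
  hence "b - a \<in> Aset d - {0}"
    using assms by (simp add: Aset_diff)
  hence "(\<Prod>c\<in>Aset d - {0}. embA b - embA a - embA c) = (0 :: 'a KK)"
    by (subst prod_zero_iff) (auto intro!: bexI[of _ "b - a"])
  thus ?thesis
    using False by (simp add: Equot_def)
qed

lemma Nop_embA:
  assumes "b \<in> Aset d"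
  shows "Nop d f (embA b) = f b"
proof -
  have "Nop d f (embA b) = (\<Sum>a\<in>Aset d. f a * (ell d * Equot d (embA b - embA a)))"
    by (simp add: Nop_def mult.assoc)
  also have "\<dots> = (\<Sum>a\<in>Aset d. if a = b then f a else 0)"
    using assms by (intro sum.cong refl) (simp add: ell_mult_Equot_embA_diff)
  finally show ?thesis
    using assms by simp
qed

lemma polyfun_Nop: "polyfun (CARD('a) ^ d - 1) (Nop d (f :: 'a::{finite,field} poly \<Rightarrow> 'a KK))"
proof -
  have "polyfun (CARD('a) ^ d - 1) (\<lambda>z. f a * ell d * Equot d (z - embA a))" for a
  proof -
    have "polyfun (card (Aset d - {0 :: 'a poly})) (\<lambda>z. \<Prod>c\<in>Aset d - {0}. z - (embA a + embA c))"
      by (intro polyfun_prod_linear) simp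
    hence "polyfun (CARD('a) ^ d - 1)
        (\<lambda>z. f a * ell d * inverse (Dprod d) * (\<Prod>c\<in>Aset d - {0}. z - (embA a + embA c)))"
      by (intro polyfun_cmult) (simp add: card_Aset)
    thus ?thesis
      by (simp add: Equot_def algebra_simps diff_diff_eq)
  qed
  thus ?thesis
    unfolding Nop_def[abs_def] by (intro polyfun_sum) simp_all
qed

lemma polyfun_Efun: "polyfun (CARD('a) ^ d) (Efun d :: 'a::{finite,field} KK \<Rightarrow> 'a KK)"
proof -
  have "polyfun (card (Aset d :: 'a poly set)) (\<lambda>z. \<Prod>c\<in>Aset d. z - (embA c :: 'a KK))"
    by (intro polyfun_prod_linear) simp
  hence "polyfun (CARD('a) ^ d) (\<lambda>z. inverse (Dprod d) * (\<Prod>c\<in>Aset d. z - (embA c :: 'a KK)))"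
    by (intro polyfun_cmult) (simp add: card_Aset)
  thus ?thesis
    unfolding Efun_def[abs_def] by simp
qed

lemma Nop_eqI:
  assumes "polyfun (CARD('a) ^ d - 1) g" "\<And>a. a \<in> Aset d \<Longrightarrow> g (embA a) = f a"
  shows "Nop d f z = g (z :: 'a::{finite,field} KK)"
proof -
  have "Nop d f = g"
  proof (rule polyfun_eqI[OF polyfun_Nop assms(1)])
    show "CARD('a) ^ d - 1 < card (embA ` Aset d :: 'a KK set)"
      using card_UNIV_ge_2[where 'a = 'a] by (simp add: card_embA_Aset)
  qed (auto simp: Nop_embA assms(2))
  thus ?thesis
    by simp
qed

section \<open>Newton interpolation of \<open>\<chi>\<close>\<close>

lemma bfun_0: "bfun 0 t = (1 :: 'a::{finite,field} KK)"
  by (simp add: bfun_def)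

lemma bfun_theta_power_power: "m < j \<Longrightarrow> bfun j (theta ^ CARD('a) ^ m) = (0 :: 'a::{finite,field} KK)"
  by (auto simp: bfun_def)

lemma bfun_power_card:
  "bfun j u ^ CARD('a) = (\<Prod>i<j. u ^ CARD('a) - theta ^ CARD('a) ^ Suc i :: 'a::{finite,field} KK)"
  unfolding bfun_def prod_power_distrib
  by (intro prod.cong refl) (simp add: power_card_diff mult.commute flip: power_mult)

lemma bfun_Suc_split:
  "bfun (Suc j) u = (\<Prod>i<Suc j. u - theta ^ CARD('a) ^ Suc i) +
     bracket (Suc j) * (\<Prod>i<j. u - theta ^ CARD('a) ^ Suc i :: 'a::{finite,field} KK)"
proof -
  have "bfun (Suc j) u = (u - theta) * (\<Prod>i<j. u - theta ^ CARD('a) ^ Suc i)"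
    unfolding bfun_def by (subst prod.lessThan_Suc_shift) simp
  thus ?thesis
    by (simp add: bracket_def algebra_simps)
qed

lemma sum_bfun_Efun_eq_power:
  "(\<Sum>j\<le>m. bfun j (theta ^ CARD('a) ^ m) * Efun j x) = (x :: 'a::{finite,field} KK) ^ CARD('a) ^ m"
proof (induction m)
  case 0
  show ?case
    by (simp add: bfun_0 Efun_0)
next
  case (Suc m)
  let ?q = "CARD('a)"
  define T :: "'a KK" where "T = theta ^ ?q ^ Suc m"
  define \<beta> :: "nat \<Rightarrow> 'a KK" where "\<beta> j = (\<Prod>i<j. T - theta ^ ?q ^ Suc i)" for j
  have \<beta>_0: "\<beta> 0 = 1" and \<beta>_Suc_m: "\<beta> (Suc m) = 0"
    by (auto simp: \<beta>_def T_def)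
  have "x ^ ?q ^ Suc m = (x ^ ?q ^ m) ^ ?q"
    by (simp add: mult.commute flip: power_mult)
  also have "\<dots> = (\<Sum>j\<le>m. bfun j (theta ^ ?q ^ m) * Efun j x) ^ ?q"
    by (simp only: Suc.IH)
  also have "\<dots> = (\<Sum>j\<le>m. \<beta> j * Efun j x ^ ?q)"
    by (simp add: power_card_sum power_mult_distrib bfun_power_card \<beta>_def T_def mult.commute
        flip: power_mult)
  also have "\<dots> = (\<Sum>j\<le>Suc m. \<beta> j * Efun j x) + (\<Sum>j\<le>m. bracket (Suc j) * \<beta> j * Efun (Suc j) x)"
    by (simp add: Efun_power_card \<beta>_Suc_m algebra_simps sum.distrib)
  also have "\<dots> = Efun 0 x + (\<Sum>j\<le>m. (\<beta> (Suc j) + bracket (Suc j) * \<beta> j) * Efun (Suc j) x)"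
    by (subst sum.atMost_Suc_shift) (simp add: \<beta>_0 distrib_right sum.distrib add.assoc)
  also have "\<dots> = (\<Sum>j\<le>Suc m. bfun j T * Efun j x)"
    by (subst sum.atMost_Suc_shift) (simp add: bfun_0 bfun_Suc_split \<beta>_def)
  finally show ?case
    by (simp add: T_def)
qed

lemma chi_altdef: "chi t a = (\<Sum>i\<le>degree a. embF (coeff a i) * (t :: 'a::{finite,field} KK) ^ i)"
  by (simp add: chi_def poly_altdef degree_map_poly coeff_map_poly)

lemma chi_theta: "chi theta a = (embA a :: 'a::{finite,field} KK)"
  by (simp add: chi_altdef embA_altdef[of a])

lemma chi_power_card: "chi (t ^ CARD('a)) a = chi t a ^ CARD('a)" for t :: "'a::{finite,field} KK"
  by (simp add: chi_altdef power_card_sum power_mult_distrib embF_power_card mult.commute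
      flip: power_mult)

lemma chi_theta_power_power:
  "chi (theta ^ CARD('a) ^ m) a = (embA a :: 'a::{finite,field} KK) ^ CARD('a) ^ m"
proof (induction m)
  case (Suc m)
  thus ?case
    using chi_power_card[of "theta ^ CARD('a) ^ m" a]
    by (simp add: mult.commute flip: power_mult)
qed (simp add: chi_theta)

lemma polyfun_bfun: "polyfun j (bfun j :: 'a::{finite,field} KK \<Rightarrow> 'a KK)"
  using polyfun_prod_linear[of "{..<j}" "\<lambda>i. theta ^ CARD('a) ^ i :: 'a KK"]
  by (simp add: bfun_def[abs_def])

lemma polyfun_chi: "polyfun (degree a) (\<lambda>t. chi t a :: 'a::{finite,field} KK)"
  unfolding polyfun_def chi_def
  by (intro exI[of _ "map_poly embF a"]) (auto simp: degree_map_poly)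

lemma sum_lessThan_bfun_Efun_eq_power:
  "m < d \<Longrightarrow>
    (\<Sum>j<d. bfun j (theta ^ CARD('a) ^ m) * Efun j x) = (x :: 'a::{finite,field} KK) ^ CARD('a) ^ m"
  by (subst sum.mono_neutral_right[of "{..<d}" "{..m}"])
     (auto simp: bfun_theta_power_power sum_bfun_Efun_eq_power)

lemma polyfun_sum_bfun: "polyfun (d - 1) (\<lambda>t. \<Sum>j<d. bfun j t * (c j :: 'a::{finite,field} KK))"
proof (intro polyfun_sum)
  fix j
  assume "j \<in> {..<d}"
  hence "polyfun (d - 1) (bfun j :: 'a KK \<Rightarrow> 'a KK)"
    by (intro polyfun_mono[OF polyfun_bfun]) auto
  from polyfun_cmult[OF this, of "c j"]
  show "polyfun (d - 1) (\<lambda>t. bfun j t * c j)"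
    by (simp only: mult.commute)
qed simp

lemma sum_bfun_Efun_embA:
  assumes "a \<in> Aset d"
  shows "(\<Sum>j<d. bfun j t * Efun j (embA a)) = chi t (a :: 'a::{finite,field} poly)"
proof (cases "d = 0")
  case True
  thus ?thesis
    using assms by (simp add: Aset_zero_eq chi_def)
next
  case False
  let ?nodes = "(\<lambda>m. theta ^ CARD('a) ^ m :: 'a KK) ` {..<d}"
  have "(\<lambda>t. \<Sum>j<d. bfun j t * Efun j (embA a)) = (\<lambda>t. chi t a)"
  proof (rule polyfun_eqI[OF polyfun_sum_bfun _ finite_imageI[OF finite_lessThan]])
    have "degree a \<le> d - 1"
      using assms by (cases "a = 0") (auto simp: Aset_def)
    thus "polyfun (d - 1) (\<lambda>t. chi t a)"
      by (rule polyfun_mono[OF polyfun_chi])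
    have "inj_on (\<lambda>m. theta ^ CARD('a) ^ m :: 'a KK) {..<d}"
      using card_UNIV_ge_2[where 'a = 'a] by (auto simp: inj_on_def theta_power_eq_iff)
    thus "d - 1 < card ?nodes"
      using False by (simp add: card_image)
  qed (auto simp: sum_lessThan_bfun_Efun_eq_power chi_theta_power_power)
  thus ?thesis
    by (simp add: fun_eq_iff)
qed

lemma polyfun_sum_bfun_Efun:
  "polyfun (CARD('a) ^ (d - 1)) (\<lambda>z. \<Sum>j<d. bfun j t * Efun j (z :: 'a::{finite,field} KK))"
proof (intro polyfun_sum)
  fix j
  assume "j \<in> {..<d}"
  hence "CARD('a) ^ j \<le> CARD('a) ^ (d - 1)"
    using card_UNIV_ge_2[where 'a = 'a] by (intro power_increasing) auto
  thus "polyfun (CARD('a) ^ (d - 1)) (\<lambda>z. bfun j t * Efun j z)"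
    by (intro polyfun_cmult polyfun_mono[OF polyfun_Efun])
qed simp

lemma Nop_chi: "Nop d (chi t) z = (\<Sum>j<d. bfun j t * Efun j (z :: 'a::{finite,field} KK))"
proof (rule Nop_eqI)
  show "polyfun (CARD('a) ^ d - 1) (\<lambda>z. \<Sum>j<d. bfun j t * Efun j z)"
  proof (cases d)
    case (Suc e)
    have "2 * CARD('a) ^ e \<le> CARD('a) * CARD('a) ^ e" "1 \<le> CARD('a) ^ e"
      using card_UNIV_ge_2[where 'a = 'a] by simp_all
    hence "CARD('a) ^ e \<le> CARD('a) * CARD('a) ^ e - 1"
      by linarith
    hence "CARD('a) ^ (d - 1) \<le> CARD('a) ^ d - 1"
      by (simp add: Suc)
    thus ?thesis
      by (rule polyfun_mono[OF polyfun_sum_bfun_Efun])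
  qed (simp add: polyfun_const)
qed (simp add: sum_bfun_Efun_embA)

lemma Nop_chi_Suc: "Nop (Suc d) (chi t) z = Nop d (chi t) z + bfun d t * Efun d z"
  by (simp add: Nop_chi)

lemma polyfun_Nop_chi: "polyfun (CARD('a) ^ (d - 1)) (Nop d (chi (t :: 'a::{finite,field} KK)))"
  using polyfun_sum_bfun_Efun by (simp add: Nop_chi[abs_def])

section \<open>The product formula\<close>

lemma prod_Nop_chi_Suc_minus_correction:
  fixes w :: "'a::{finite,field} KK" and t :: "'i \<Rightarrow> 'a KK" and d :: nat
  assumes "finite I"
  defines "M l \<equiv> mixed_esym I (\<lambda>i. Nop d (chi (t i)) w) (\<lambda>i. bfun d (t i)) l"
  shows "(\<Prod>i\<in>I. Nop (Suc d) (chi (t i)) w) -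
           bracket (Suc d) * Efun (Suc d) w *
             (\<Sum>l\<in>{CARD('a)..card I}. Efun d w ^ (l - CARD('a)) * M l) =
         (\<Sum>l\<le>card I. Efun d w ^ (if l < CARD('a) then l else l - CARD('a) + 1) * M l)"
proof -
  have "(\<Prod>i\<in>I. Nop (Suc d) (chi (t i)) w) = (\<Sum>l\<le>card I. Efun d w ^ l * M l)"
    using prod_add_mult_expand[OF assms(1)] by (simp add: Nop_chi_Suc M_def)
  moreover have "bracket (Suc d) * Efun (Suc d) w = Efun d w ^ CARD('a) - Efun d w"
    by (simp add: Efun_power_card)
  ultimately show ?thesis
    using sum_powers_reduce[where q = "CARD('a)" and e = "Efun d w" and s = "card I" and c = M]
      card_UNIV_ge_2[where 'a = 'a]
    by simp
qed

lemma polyfun_reduced_Nop_chi_expansion: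
  assumes "d \<ge> 1" "finite I" "card I \<le> 2 * (CARD('a) - 1)"
  shows "polyfun (CARD('a) ^ Suc d - 1) (\<lambda>w :: 'a::{finite,field} KK. \<Sum>l\<le>card I.
           Efun d w ^ (if l < CARD('a) then l else l - CARD('a) + 1) *
           mixed_esym I (\<lambda>i. Nop d (chi (t i)) w) (\<lambda>i. bfun d (t i)) l)"
proof -
  have "CARD('a) ^ Suc d = CARD('a) * CARD('a) * CARD('a) ^ (d - 1)"
    using assms(1) by (cases d) simp_all
  moreover have "polyfun (CARD('a) * CARD('a) ^ (d - 1)) (Efun d :: 'a KK \<Rightarrow> 'a KK)"
    using polyfun_Efun[of d] assms(1) by (simp flip: power_Suc)
  ultimately show ?thesis
    using card_UNIV_ge_2[where 'a = 'a] assms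
    by (simp only:) (intro polyfun_reduced_expansion polyfun_Nop_chi; simp)
qed

theorem proposition2p8:
  fixes t :: "nat \<Rightarrow> 'a::{finite,field} KK" and z :: "'a KK" and d s :: nat
  assumes "d \<ge> 1" and "1 \<le> s" and "s \<le> 2 * (card (UNIV :: 'a set) - 1)"
  shows "Nop (d+1) (\<lambda>a. \<Prod>i\<in>{1..s}. chi (t i) a) z =
     (\<Prod>i\<in>{1..s}. Nop (d+1) (chi (t i)) z)
     - bracket (d+1) * Efun (d+1) z *
       (\<Sum>l\<in>{card (UNIV :: 'a set)..s}. Efun d z ^ (l - card (UNIV :: 'a set)) *
          (\<Sum>\<alpha>\<in>{\<alpha>. \<alpha> \<in> {1..s} \<rightarrow>\<^sub>E {0::nat, 1} \<and> sum \<alpha> {1..s} = l}.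
             \<Prod>i\<in>{1..s}. Nop d (chi (t i)) z ^ (1 - \<alpha> i) * bfun d (t i) ^ (\<alpha> i)))"
proof -
  let ?q = "CARD('a)"
  define G where "G w = (\<Sum>l\<le>s. Efun d w ^ (if l < ?q then l else l - ?q + 1) *
    mixed_esym {1..s} (\<lambda>i. Nop d (chi (t i)) w) (\<lambda>i. bfun d (t i)) l)" for w
  have rhs_eq_G: "(\<Prod>i\<in>{1..s}. Nop (d+1) (chi (t i)) w) - bracket (d+1) * Efun (d+1) w *
      (\<Sum>l\<in>{?q..s}. Efun d w ^ (l - ?q) *
        mixed_esym {1..s} (\<lambda>i. Nop d (chi (t i)) w) (\<lambda>i. bfun d (t i)) l) = G w" for w
    using prod_Nop_chi_Suc_minus_correction[of "{1..s}" d t w] by (simp add: G_def)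
  have "Nop (d+1) (\<lambda>a. \<Prod>i\<in>{1..s}. chi (t i) a) z = G z"
  proof (rule Nop_eqI)
    show "polyfun (?q ^ (d + 1) - 1) G"
      using polyfun_reduced_Nop_chi_expansion[of d "{1..s}" t] assms by (simp add: G_def[abs_def])
    fix a :: "'a poly"
    assume "a \<in> Aset (d+1)"
    thus "G (embA a) = (\<Prod>i\<in>{1..s}. chi (t i) a)"
      by (simp add: Nop_embA Efun_embA flip: rhs_eq_G)
  qed
  thus ?thesis
    using rhs_eq_G[of z] by (simp add: mixed_esym_def)
qed

end
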